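(* Let $(X,d)$ be a metric space and $T:X\to X$ a map. Let $\varphi:[0,\infty)\to[0,\infty)$ be increasing (i.e. $t_1\le t_2\Rightarrow \varphi(t_1)\le\varphi(t_2)$) and suppose: (1) $\varphi$ is regressive: $\varphi(t)<t$ for all $t>0$; (2) $\varphi$ is Matkowski admissible: $\varphi^n(t)\to 0$ as $n\to\infty$ for every $t>0$, where $\varphi^n$ is the $n$-th iterate; (3) $\varphi$ is complement-coercive: $\lim_{t\to\infty}(t-\varphi(t))=\infty$. Assume $T$ is anticipative $(d;\varphi)$-contractive, i.e. for all $x,y\in X$, $$d(Tx,Ty)\le \varphi\big(\operatorname{diam}\{x,Tx,T^2x,y,Ty\}\big),$$ where $\operatorname{diam}(U)=\sup\{d(u,v);u,v\in U\}$. Assume $(X,d)$ is o-complete (every $d$-Cauchy orbital sequence is $d$-convergent), and that at least one of the following holds: (2a) $T$ is o-continuous: whenever $(x_n)$ is an orbital sequence with $x_n\to x$ in $d$, we have $Tx_n\to Tx$ in $d$; (2b) $\varphi$ is super regressive: $\varphi(s+0)<s$ for all $s>0$, where $\varphi(s+0)=\lim_{t\to s^+}\varphi(t)$. Then $T$ is globally strong Picard modulo $d$; that is, there is $z\in X$ with $\{x\in X: Tx=x\}=\{z\}$, and $T^nx\to z$ in $d$ as $n\to\infty$ for every $x\in X$.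
   Context: A sequence $(z_n)_{n\ge0}$ in $X$ is called orbital (modulo $T$) if it is a subsequence of $(T^nx)_{n\ge 0}$ for some $x\in X$. *)

theory Defs
  imports "HOL-Analysis.Analysis"
begin

definition orbital :: "('a \<Rightarrow> 'a) \<Rightarrow> (nat \<Rightarrow> 'a) \<Rightarrow> bool" where
  "orbital T z \<longleftrightarrow> (\<exists>x r. strict_mono r \<and> (\<forall>n. z n = (T ^^ r n) x))"

definition o_complete :: "('a::metric_space \<Rightarrow> 'a) \<Rightarrow> bool" where
  "o_complete T \<longleftrightarrow> (\<forall>z. orbital T z \<and> Cauchy z \<longrightarrow> convergent z)"

definition o_continuous :: "('a::metric_space \<Rightarrow> 'a) \<Rightarrow> bool" where
  "o_continuous T \<longleftrightarrow>
     (\<forall>z a. orbital T z \<and> z \<longlonglongrightarrow> a \<longrightarrow> (\<lambda>n. T (z n)) \<longlonglongrightarrow> T a)"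

definition anticipative_contractive :: "('a::metric_space \<Rightarrow> 'a) \<Rightarrow> (real \<Rightarrow> real) \<Rightarrow> bool" where
  "anticipative_contractive T \<phi> \<longleftrightarrow>
     (\<forall>x y. dist (T x) (T y) \<le> \<phi> (diameter {x, T x, T (T x), y, T y}))"

end

theory Submission
  imports Defs
begin

text \<open>For a segment of an orbit, contracting anticipatively gives
  \<open>diam \<le> d(x, Tx) + \<phi>(diam)\<close>, so complement-coercivity bounds every orbit. The diameters
  \<open>D\<^sub>k\<close> of the orbit tails then satisfy \<open>D\<^sub>k\<^sub>+\<^sub>1 \<le> \<phi>(D\<^sub>k)\<close>, hence
  \<open>D\<^sub>k \<le> \<phi>\<^sup>k(D\<^sub>0 + 1) \<rightarrow> 0\<close> and orbits are Cauchy. Their limit \<open>z\<close> is fixed: directly under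
  o-continuity, and under super regressivity because \<open>s = d(z, Tz) > 0\<close> would give
  \<open>s \<le> \<phi>(s + \<epsilon>)\<close> for all \<open>\<epsilon> > 0\<close>, i.e. \<open>s \<le> \<phi>(s+0)\<close>. Regressivity makes the fixed point
  unique.\<close>

lemma diameter_le_dist:
  fixes S :: "'a::metric_space set"
  assumes "S \<noteq> {}" "\<And>x y. x \<in> S \<Longrightarrow> y \<in> S \<Longrightarrow> dist x y \<le> B"
  shows "diameter S \<le> B"
  using assms unfolding diameter_def by (auto intro!: cSUP_least)

lemma diameter_insert_cball_le:
  fixes z w :: "'a::metric_space"
  assumes "0 \<le> r"
  shows "diameter (insert w (cball z r)) \<le> dist z w + 2 * r"
proof (rule diameter_le_dist)
  fix u v assume "u \<in> insert w (cball z r)" "v \<in> insert w (cball z r)"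
  then show "dist u v \<le> dist z w + 2 * r"
    using assms dist_triangle[of u v z] dist_triangle[of w v z] dist_triangle[of u w z]
    by (auto simp: dist_commute) (smt (verit) zero_le_dist)
qed simp

lemma Lim_at_right_mono_on_eq_Inf:
  fixes \<phi> :: "real \<Rightarrow> real"
  assumes mono: "mono_on {0..} \<phi>" and nonneg: "\<And>t. 0 \<le> t \<Longrightarrow> 0 \<le> \<phi> t" and "0 \<le> s"
  shows "Lim (at_right s) \<phi> = Inf (\<phi> ` {s<..})"
proof -
  have "(\<phi> \<longlongrightarrow> Inf (\<phi> ` ({s<..} \<inter> UNIV))) (at s within ({s<..} \<inter> UNIV))"
    by (rule Lim_right_bound[where K=0]) (use assms in \<open>auto intro: mono_onD\<close>)
  then show ?thesis
    by (intro tendsto_Lim) auto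
qed

lemma anticipative_contractive_le_diameter:
  assumes contr: "anticipative_contractive T \<phi>" and mono: "mono_on {0..} \<phi>"
    and "{x, T x, T (T x), y, T y} \<subseteq> S" and "bounded S"
  shows "dist (T x) (T y) \<le> \<phi> (diameter S)"
proof -
  have "dist (T x) (T y) \<le> \<phi> (diameter {x, T x, T (T x), y, T y})"
    using contr unfolding anticipative_contractive_def by blast
  also have "\<dots> \<le> \<phi> (diameter S)"
    using assms by (intro mono_onD[OF mono]) (auto intro: diameter_ge_0 diameter_subset)
  finally show ?thesis .
qed

lemma fixed_point_unique:
  assumes contr: "anticipative_contractive T \<phi>" and mono: "mono_on {0..} \<phi>"
    and regressive: "\<And>t. 0 < t \<Longrightarrow> \<phi> t < t"
    and "T u = u" "T v = v"
  shows "u = v"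
proof (rule ccontr)
  assume "u \<noteq> v"
  have "dist u v \<le> \<phi> (diameter {u, v})"
    using anticipative_contractive_le_diameter[OF contr mono, of u v "{u, v}"] assms by simp
  also have "\<dots> \<le> \<phi> (dist u v)"
    by (intro mono_onD[OF mono] diameter_le_dist) (auto simp: dist_commute diameter_ge_0)
  also have "\<dots> < dist u v"
    using regressive \<open>u \<noteq> v\<close> by simp
  finally show False by simp
qed

lemma orbit_dist_Suc_le:
  assumes nonneg: "\<And>t. 0 \<le> t \<Longrightarrow> 0 \<le> \<phi> t"
    and contr: "anticipative_contractive T \<phi>" and mono: "mono_on {0..} \<phi>"
    and bdd: "bounded ((\<lambda>k. (T ^^ k) x) ` A)" and seg: "{min p q..Suc (max p q)} \<subseteq> A"
  shows "dist ((T ^^ Suc p) x) ((T ^^ Suc q) x) \<le> \<phi> (diameter ((\<lambda>k. (T ^^ k) x) ` A))"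
proof -
  have less: "dist ((T ^^ Suc p) x) ((T ^^ Suc q) x) \<le> \<phi> (diameter ((\<lambda>k. (T ^^ k) x) ` A))"
    if "p < q" "{p..Suc q} \<subseteq> A" for p q
  proof -
    have "(\<lambda>k. (T ^^ k) x) ` {p, Suc p, Suc (Suc p), q, Suc q} \<subseteq> (\<lambda>k. (T ^^ k) x) ` A"
      using that by (intro image_mono) auto
    then have "{(T ^^ p) x, T ((T ^^ p) x), T (T ((T ^^ p) x)), (T ^^ q) x, T ((T ^^ q) x)}
        \<subseteq> (\<lambda>k. (T ^^ k) x) ` A"
      by simp
    from anticipative_contractive_le_diameter[OF contr mono this bdd] show ?thesis
      by simp
  qed
  consider "p < q" | "p = q" | "q < p" by linarith
  then show ?thesis
  proof cases
    case 2
    then show ?thesis using nonneg bdd by (simp add: diameter_ge_0)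
  qed (use less[of p q] less[of q p] seg in \<open>auto simp: dist_commute\<close>)
qed

lemma orbit_segment_diameter_le:
  fixes \<phi> :: "real \<Rightarrow> real"
  assumes nonneg: "\<And>t. 0 \<le> t \<Longrightarrow> 0 \<le> \<phi> t"
    and contr: "anticipative_contractive T \<phi>" and mono: "mono_on {0..} \<phi>"
  shows "diameter ((\<lambda>k. (T ^^ k) x) ` {..n})
    \<le> dist x (T x) + \<phi> (diameter ((\<lambda>k. (T ^^ k) x) ` {..n}))"
proof -
  define xs where "xs k = (T ^^ k) x" for k
  define \<delta> where "\<delta> = diameter (xs ` {..n})"
  have bdd: "bounded (xs ` {..n})"
    by (simp add: finite_imp_bounded)
  have "0 \<le> \<phi> \<delta>"
    using nonneg diameter_ge_0[OF bdd] unfolding \<delta>_def by blast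
  have from_one: "dist (xs (Suc p)) (xs (Suc q)) \<le> \<phi> \<delta>" if "Suc p \<le> n" "Suc q \<le> n" for p q
    using orbit_dist_Suc_le[OF nonneg contr mono, of x "{..n}" p q] bdd that
    unfolding xs_def \<delta>_def by (auto simp: max_def)
  have "dist (xs i) (xs j) \<le> dist x (T x) + \<phi> \<delta>" if "i \<le> n" "j \<le> n" "i \<le> j" for i j
  proof (cases i)
    case 0
    show ?thesis
    proof (cases j)
      case (Suc q)
      have "dist (xs 0) (xs j) \<le> dist (xs 0) (xs 1) + dist (xs 1) (xs j)"
        by (rule dist_triangle)
      also have "dist (xs 1) (xs j) \<le> \<phi> \<delta>"
        using from_one[of 0 q] Suc that by simp
      finally show ?thesis using 0 by (simp add: xs_def)
    qed (use 0 \<open>0 \<le> \<phi> \<delta>\<close> in simp)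
  next
    case (Suc p)
    then obtain q where "j = Suc q"
      using \<open>i \<le> j\<close> by (cases j) auto
    then show ?thesis
      using from_one[of p q] Suc that by (simp add: add_increasing)
  qed
  then have "\<delta> \<le> dist x (T x) + \<phi> \<delta>"
    unfolding \<delta>_def by (intro diameter_le_dist) (auto, metis dist_commute nle_le)
  then show ?thesis
    unfolding \<delta>_def xs_def .
qed

lemma orbit_bounded:
  fixes \<phi> :: "real \<Rightarrow> real"
  assumes nonneg: "\<And>t. 0 \<le> t \<Longrightarrow> 0 \<le> \<phi> t"
    and contr: "anticipative_contractive T \<phi>" and mono: "mono_on {0..} \<phi>"
    and coercive: "filterlim (\<lambda>t. t - \<phi> t) at_top at_top"
  shows "bounded (range (\<lambda>n. (T ^^ n) x))"
proof -
  define xs where "xs n = (T ^^ n) x" for n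
  obtain N where N: "\<And>t. N \<le> t \<Longrightarrow> dist x (T x) + 1 \<le> t - \<phi> t"
    using coercive unfolding filterlim_at_top eventually_at_top_linorder by blast
  have segment: "diameter (xs ` {..n}) < N" for n
    using orbit_segment_diameter_le[OF nonneg contr mono, of x n] N[of "diameter (xs ` {..n})"]
    unfolding xs_def by fastforce
  have "dist (xs i) (xs j) \<le> N" for i j
    using diameter_bounded_bound[of "xs ` {..max i j}" "xs i" "xs j"] segment[of "max i j"]
    by (simp add: finite_imp_bounded)
  then show ?thesis
    unfolding bounded_two_points xs_def by auto
qed

lemma orbit_Cauchy:
  fixes \<phi> :: "real \<Rightarrow> real"
  assumes nonneg: "\<And>t. 0 \<le> t \<Longrightarrow> 0 \<le> \<phi> t"
    and contr: "anticipative_contractive T \<phi>" and mono: "mono_on {0..} \<phi>"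
    and matkowski: "\<And>t. 0 < t \<Longrightarrow> (\<lambda>n. (\<phi> ^^ n) t) \<longlonglongrightarrow> 0"
    and coercive: "filterlim (\<lambda>t. t - \<phi> t) at_top at_top"
  shows "Cauchy (\<lambda>n. (T ^^ n) x)"
proof -
  define xs where "xs n = (T ^^ n) x" for n
  define D where "D k = diameter {xs i | i. k \<le> i}" for k
  have bdd: "bounded (range xs)"
    using orbit_bounded[OF nonneg contr mono coercive] unfolding xs_def .
  have tail: "{xs i | i. k \<le> i} = xs ` {k..}" for k
    by auto
  have bdd_tail: "bounded (xs ` {k..})" for k
    using bdd by (rule bounded_subset) auto
  have D_nonneg: "0 \<le> D k" for k
    unfolding D_def tail using bdd_tail by (rule diameter_ge_0)
  have D_Suc: "D (Suc k) \<le> \<phi> (D k)" for k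
    unfolding D_def tail
  proof (rule diameter_le_dist)
    fix u v assume "u \<in> xs ` {Suc k..}" "v \<in> xs ` {Suc k..}"
    then obtain i j where ij: "u = xs i" "v = xs j" "Suc k \<le> i" "Suc k \<le> j"
      by auto
    obtain p q where "i = Suc p" "j = Suc q"
      using ij by (cases i; cases j) auto
    with ij show "dist u v \<le> \<phi> (diameter (xs ` {k..}))"
      using orbit_dist_Suc_le[OF nonneg contr mono, of x "{k..}" p q] bdd_tail
      unfolding xs_def by auto
  qed auto
  \<comment> \<open>shifted by 1 because the Matkowski condition only concerns positive arguments\<close>
  define M where "M = D 0 + 1"
  have D_le_iter: "D k \<le> (\<phi> ^^ k) M" for k
  proof (induction k)
    case 0
    then show ?case by (simp add: M_def)
  next
    case (Suc k)
    have "D (Suc k) \<le> \<phi> (D k)" by (rule D_Suc)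
    also have "\<dots> \<le> \<phi> ((\<phi> ^^ k) M)"
      using Suc.IH D_nonneg[of k] by (intro mono_onD[OF mono]) simp_all
    finally show ?case by simp
  qed
  have iter_lim: "(\<lambda>k. (\<phi> ^^ k) M) \<longlonglongrightarrow> 0"
    using D_nonneg[of 0] by (intro matkowski) (simp add: M_def)
  have "D \<longlonglongrightarrow> 0"
    by (rule tendsto_sandwich[OF always_eventually always_eventually tendsto_const iter_lim])
      (use D_nonneg D_le_iter in blast)+
  then show ?thesis
    using bdd unfolding cauchy_iff_diameter_tends_to_zero_and_bounded D_def xs_def by simp
qed

lemma orbital_orbit: "orbital T (\<lambda>n. (T ^^ n) x)"
  unfolding orbital_def by (intro exI[of _ x] exI[of _ id]) (auto simp: strict_mono_def)

lemma o_continuous_orbit_limit_fixed: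
  assumes "o_continuous T" and lim: "(\<lambda>n. (T ^^ n) x) \<longlonglongrightarrow> z"
  shows "T z = z"
proof -
  have "(\<lambda>n. (T ^^ Suc n) x) \<longlonglongrightarrow> T z"
    using assms orbital_orbit unfolding o_continuous_def by fastforce
  moreover have "(\<lambda>n. (T ^^ Suc n) x) \<longlonglongrightarrow> z"
    using lim by (rule LIMSEQ_Suc)
  ultimately show ?thesis
    by (rule LIMSEQ_unique)
qed

lemma orbit_limit_fixed_if_super_regressive:
  fixes \<phi> :: "real \<Rightarrow> real"
  assumes nonneg: "\<And>t. 0 \<le> t \<Longrightarrow> 0 \<le> \<phi> t"
    and contr: "anticipative_contractive T \<phi>" and mono: "mono_on {0..} \<phi>"
    and super_regressive: "\<And>s. 0 < s \<Longrightarrow> Lim (at_right s) \<phi> < s"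
    and lim: "(\<lambda>n. (T ^^ n) x) \<longlonglongrightarrow> z"
  shows "T z = z"
proof (rule ccontr)
  assume "T z \<noteq> z"
  define s where "s = dist z (T z)"
  have "0 < s"
    using \<open>T z \<noteq> z\<close> unfolding s_def by simp
  have s_le_phi_above: "s \<le> \<phi> (s + r)" if "0 < r" for r
  proof -
    define S where "S = insert (T z) (cball z (r / 2))"
    have "bounded S"
      unfolding S_def by simp
    have near0: "\<forall>\<^sub>F n in sequentially. (T ^^ n) x \<in> cball z (r / 2)"
      using tendstoD[OF lim half_gt_zero[OF \<open>0 < r\<close>]] by eventually_elim (simp add: dist_commute)
    have near1: "\<forall>\<^sub>F n in sequentially. (T ^^ Suc n) x \<in> cball z (r / 2)"
      using eventually_sequentially_Suc[of "\<lambda>n. (T ^^ n) x \<in> cball z (r / 2)"] near0 by blast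
    have near2: "\<forall>\<^sub>F n in sequentially. (T ^^ Suc (Suc n)) x \<in> cball z (r / 2)"
      using eventually_sequentially_Suc[of "\<lambda>n. (T ^^ Suc n) x \<in> cball z (r / 2)"] near1 by blast
    from near0 near1 near2 have "\<forall>\<^sub>F n in sequentially.
        {(T ^^ n) x, T ((T ^^ n) x), T (T ((T ^^ n) x)), z, T z} \<subseteq> S"
      by eventually_elim (use \<open>0 < r\<close> in \<open>auto simp: S_def\<close>)
    then have bound: "\<forall>\<^sub>F n in sequentially. dist ((T ^^ Suc n) x) (T z) \<le> \<phi> (s + r)"
    proof eventually_elim
      case (elim n)
      have "dist ((T ^^ Suc n) x) (T z) \<le> \<phi> (diameter S)"
        using anticipative_contractive_le_diameter[OF contr mono elim \<open>bounded S\<close>] by simp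
      also have "\<dots> \<le> \<phi> (s + r)"
        using diameter_insert_cball_le[where w = "T z" and z = z and r = "r / 2"]
          diameter_ge_0[OF \<open>bounded S\<close>] \<open>0 < r\<close>
        unfolding S_def s_def by (intro mono_onD[OF mono]) auto
      finally show ?case .
    qed
    have "(\<lambda>n. dist ((T ^^ Suc n) x) (T z)) \<longlonglongrightarrow> s"
      unfolding s_def using LIMSEQ_Suc[OF lim] by (intro tendsto_dist tendsto_const)
    from tendsto_upperbound[OF this bound] show ?thesis
      by simp
  qed
  have "s \<le> Inf (\<phi> ` {s<..})"
  proof (rule cInf_greatest)
    fix y assume "y \<in> \<phi> ` {s<..}"
    then obtain t where "s < t" "y = \<phi> t" by auto
    then show "s \<le> y"
      using s_le_phi_above[of "t - s"] by simp
  qed auto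
  also have "\<dots> = Lim (at_right s) \<phi>"
    using Lim_at_right_mono_on_eq_Inf[OF mono nonneg] \<open>0 < s\<close> by simp
  finally show False
    using super_regressive[OF \<open>0 < s\<close>] by simp
qed

lemma orbit_tendsto_fixed_point:
  fixes \<phi> :: "real \<Rightarrow> real"
  assumes nonneg: "\<And>t. 0 \<le> t \<Longrightarrow> 0 \<le> \<phi> t"
    and contr: "anticipative_contractive T \<phi>" and mono: "mono_on {0..} \<phi>"
    and matkowski: "\<And>t. 0 < t \<Longrightarrow> (\<lambda>n. (\<phi> ^^ n) t) \<longlonglongrightarrow> 0"
    and coercive: "filterlim (\<lambda>t. t - \<phi> t) at_top at_top"
    and "o_complete T"
    and alt: "o_continuous T \<or> (\<forall>s>0. Lim (at_right s) \<phi> < s)"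
  obtains z where "T z = z" "(\<lambda>n. (T ^^ n) x) \<longlonglongrightarrow> z"
proof -
  have "Cauchy (\<lambda>n. (T ^^ n) x)"
    by (rule orbit_Cauchy[OF nonneg contr mono matkowski coercive])
  with \<open>o_complete T\<close> orbital_orbit[of T x] have "convergent (\<lambda>n. (T ^^ n) x)"
    unfolding o_complete_def by blast
  then obtain z where lim: "(\<lambda>n. (T ^^ n) x) \<longlonglongrightarrow> z"
    unfolding convergent_def by blast
  from alt have "T z = z"
  proof
    assume "o_continuous T"
    then show ?thesis
      using lim by (rule o_continuous_orbit_limit_fixed)
  next
    assume super_regressive: "\<forall>s>0. Lim (at_right s) \<phi> < s"
    show ?thesis
      by (rule orbit_limit_fixed_if_super_regressive[OF nonneg contr mono
            super_regressive[rule_format] lim])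
  qed
  with lim show ?thesis
    using that by blast
qed

theorem theorem2:
  fixes T :: "'a::metric_space \<Rightarrow> 'a" and \<phi> :: "real \<Rightarrow> real"
  assumes phi_nonneg: "\<forall>t\<ge>0. \<phi> t \<ge> 0"
    and phi_incr: "\<forall>t1 t2. 0 \<le> t1 \<and> t1 \<le> t2 \<longrightarrow> \<phi> t1 \<le> \<phi> t2"
    and regressive: "\<forall>t>0. \<phi> t < t"
    and matkowski: "\<forall>t>0. (\<lambda>n. (\<phi> ^^ n) t) \<longlonglongrightarrow> 0"
    and compl_coercive: "filterlim (\<lambda>t. t - \<phi> t) at_top at_top"
    and contr: "anticipative_contractive T \<phi>"
    and ocomplete: "o_complete T"
    and alt: "o_continuous T \<or> (\<forall>s>0. Lim (at_right s) \<phi> < s)"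
  shows "\<exists>z. {x. T x = x} = {z} \<and> (\<forall>x. (\<lambda>n. (T ^^ n) x) \<longlonglongrightarrow> z)"
proof -
  have mono: "mono_on {0..} \<phi>"
    using phi_incr by (intro mono_onI) simp
  note orbit_limit = orbit_tendsto_fixed_point[OF _ contr mono matkowski[rule_format]
      compl_coercive ocomplete alt]
  obtain z where "T z = z"
    using orbit_limit phi_nonneg by blast
  have fixed_iff: "T u = u \<longleftrightarrow> u = z" for u
    using fixed_point_unique[OF contr mono regressive[rule_format] _ \<open>T z = z\<close>] \<open>T z = z\<close>
    by blast
  show ?thesis
  proof (intro exI conjI allI)
    show "{x. T x = x} = {z}"
      using fixed_iff by blast
    show "(\<lambda>n. (T ^^ n) x) \<longlonglongrightarrow> z" for x
      using orbit_limit[of x] phi_nonneg fixed_iff by metis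
  qed
qed

end
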